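(* Let $a, b, n$ be positive integers with $b>1$, $n>1$ and $\gcd(r_b(n),a)=1$, and for $i = 2,\ldots,n$ set $\alpha_i := a_i + \sum_{j=i}^n (b-1)\, a_j$. Then: (a) $\alpha_i \in \operatorname{Ap}(S_a(b,n))$ for every $i = 2,\ldots,n$; (b) if $a < b^n - 1$ then $\alpha_2 > \alpha_3 > \cdots > \alpha_n$, and if $a > b^n-1$ then $\alpha_2 < \alpha_3 < \cdots < \alpha_n$; (c) for every $\omega \in \operatorname{Ap}(S_a(b,n))$ there exists $i \in \{2,\ldots,n\}$ such that $\omega \le \alpha_i$.
   Context: For $\ell \ge 1$, $r_b(\ell) = \sum_{j=0}^{\ell-1} b^j$, and $r_b(0)=0$. For $i \ge 1$, $a_i := r_b(n) + a\, r_b(i-1)$; $S_a(b,n)$ is the numerical semigroup generated by $\{a_i\}$, with multiplicity $a_1$. $\operatorname{Ap}(S_a(b,n)) = \{\omega \in S_a(b,n) : \omega - a_1 \notin S_a(b,n)\}$. *)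

theory Defs
  imports Main
begin

definition repunit :: "nat \<Rightarrow> nat \<Rightarrow> nat" where
  "repunit b l = (\<Sum>j<l. b ^ j)"

definition gen :: "nat \<Rightarrow> nat \<Rightarrow> nat \<Rightarrow> nat \<Rightarrow> nat" where
  "gen a b n i = repunit b n + a * repunit b (i - 1)"

inductive_set Ssg :: "nat \<Rightarrow> nat \<Rightarrow> nat \<Rightarrow> nat set" for a b n where
  zero: "0 \<in> Ssg a b n"
| step: "i \<ge> 1 \<Longrightarrow> x \<in> Ssg a b n \<Longrightarrow> gen a b n i + x \<in> Ssg a b n"

definition Apery :: "nat \<Rightarrow> nat \<Rightarrow> nat \<Rightarrow> nat set" where
  "Apery a b n = {w \<in> Ssg a b n. \<not> (w \<ge> gen a b n 1 \<and> w - gen a b n 1 \<in> Ssg a b n)}"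

definition alpha :: "nat \<Rightarrow> nat \<Rightarrow> nat \<Rightarrow> nat \<Rightarrow> nat" where
  "alpha a b n i = gen a b n i + (\<Sum>j=i..n. (b - 1) * gen a b n j)"

end

theory Submission
  imports Defs "HOL-Number_Theory.Cong"
begin

text \<open>
  The generators satisfy b a_j + a_i = b a_(i-1) + a_(j+1), which lowers the sum of the
  indices, and a_j = a_(j-n) + a b^(j-n-1) a_1 for j > n. Hence a representation of an
  Apery element with least index sum is a combination sum_(j=2..n) d_j a_j with admissible
  digits: d_j <= b, and d_j = b only if all lower digits vanish. Such a combination equals
  (sum d_j) r_b(n) + a sum d_j r_b(j-1), where the second sum is below r_b(n) and determines
  the digits. As a is a unit modulo r_b(n), every element of the semigroup is uniquely
  sum d_j a_j + k a_1 with admissible d. The digits of alpha_i are admissible with k = 0, so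
  alpha_i - a_1 is not in the semigroup; every admissible digit vector is dominated by that
  of some alpha_i; and alpha_i + a = alpha_(i+1) + (b^n - 1).
\<close>

lemma repunit_0 [simp]: "repunit b 0 = 0"
  by (simp add: repunit_def)

lemma repunit_Suc: "repunit b (Suc k) = b * repunit b k + 1"
  unfolding repunit_def by (subst sum.lessThan_Suc_shift) (simp add: sum_distrib_left)

lemma repunit_add: "repunit b (n + k) = repunit b k + b ^ k * repunit b n"
  by (induction k) (simp_all add: repunit_Suc algebra_simps)

lemma repunit_mult_pred: "b \<ge> 1 \<Longrightarrow> repunit b n * (b - 1) = b ^ n - 1"
proof (induction n)
  case 0
  then show ?case by simp
next
  case (Suc n)
  have "b ^ n \<ge> 1"
    using Suc.prems by simp
  then show ?case
    using Suc by (simp add: repunit_Suc algebra_simps diff_mult_distrib2)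
qed

lemma repunit_pos: "m \<ge> 1 \<Longrightarrow> repunit b m > 0"
  by (cases m) (auto simp: repunit_Suc)

lemma gen_1: "gen a b n 1 = repunit b n"
  by (simp add: gen_def)

lemma gen_reduce:
  assumes "j > n"
  shows "gen a b n j = gen a b n (j - n) + a * b ^ (j - n - 1) * gen a b n 1"
proof -
  have "j - 1 = n + (j - n - 1)"
    using assms by simp
  then have "repunit b (j - 1) = repunit b (j - n - 1) + b ^ (j - n - 1) * repunit b n"
    by (metis repunit_add)
  then show ?thesis
    by (simp add: gen_def algebra_simps)
qed

lemma gen_exchange:
  assumes "i \<ge> 2" "j \<ge> 1"
  shows "b * gen a b n j + gen a b n i = b * gen a b n (i - 1) + gen a b n (j + 1)"
proof -
  have "i - 1 = Suc (i - 1 - 1)"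
    using assms(1) by simp
  then have "repunit b (i - 1) = b * repunit b (i - 1 - 1) + 1"
    by (metis repunit_Suc)
  then show ?thesis
    using assms(2) by (cases j) (auto simp: gen_def algebra_simps repunit_Suc)
qed

lemma Ssg_add: "x \<in> Ssg a b n \<Longrightarrow> y \<in> Ssg a b n \<Longrightarrow> x + y \<in> Ssg a b n"
  by (induction x rule: Ssg.induct) (auto simp: add.assoc intro: Ssg.step)

lemma gen_in_Ssg: "i \<ge> 1 \<Longrightarrow> gen a b n i \<in> Ssg a b n"
  using Ssg.step[OF _ Ssg.zero] by fastforce

lemma mult_in_Ssg: "x \<in> Ssg a b n \<Longrightarrow> k * x \<in> Ssg a b n"
  by (induction k) (auto intro: Ssg.zero Ssg_add)

lemma sum_in_Ssg: "finite A \<Longrightarrow> (\<And>j. j \<in> A \<Longrightarrow> f j \<in> Ssg a b n) \<Longrightarrow> sum f A \<in> Ssg a b n"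
  by (induction A rule: finite_induct) (auto intro: Ssg.zero Ssg_add)

lemma Ssg_iff_mset:
  "w \<in> Ssg a b n \<longleftrightarrow> (\<exists>M. (\<forall>j\<in>#M. j \<ge> 1) \<and> w = (\<Sum>j\<in>#M. gen a b n j))"
proof
  show "w \<in> Ssg a b n \<Longrightarrow> \<exists>M. (\<forall>j\<in>#M. j \<ge> 1) \<and> w = (\<Sum>j\<in>#M. gen a b n j)"
  proof (induction w rule: Ssg.induct)
    case zero
    then show ?case
      by (intro exI[of _ "{#}"]) simp
  next
    case (step i x)
    then obtain M where "\<forall>j\<in>#M. j \<ge> 1" "x = (\<Sum>j\<in>#M. gen a b n j)"
      by blast
    with step show ?case
      by (intro exI[of _ "add_mset i M"]) auto
  qed
  have "(\<forall>j\<in>#M. j \<ge> 1) \<Longrightarrow> (\<Sum>j\<in>#M. gen a b n j) \<in> Ssg a b n" for M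
    by (induction M) (auto intro: Ssg.zero Ssg.step)
  then show "\<exists>M. (\<forall>j\<in>#M. j \<ge> 1) \<and> w = (\<Sum>j\<in>#M. gen a b n j) \<Longrightarrow> w \<in> Ssg a b n"
    by blast
qed

lemma sum_mset_image_eq_sum_count:
  "set_mset M \<subseteq> A \<Longrightarrow> finite A \<Longrightarrow> (\<Sum>j\<in>#M. f j) = (\<Sum>j\<in>A. count M j * f j)"
proof (induction M)
  case empty
  then show ?case by simp
next
  case (add x M)
  have "(\<Sum>j\<in>A. count (add_mset x M) j * f j) = (\<Sum>j\<in>A. count M j * f j + (if j = x then f j else 0))"
    by (rule sum.cong) auto
  also have "\<dots> = (\<Sum>j\<in>A. count M j * f j) + f x"
    using add.prems by (simp add: sum.distrib)
  finally show ?case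
    using add by simp
qed

lemma Apery_mset_support:
  assumes "a > 0" "b > 0" "w \<in> Apery a b n"
    and M: "\<forall>j\<in>#M. j \<ge> 1" "w = (\<Sum>j\<in>#M. gen a b n j)"
  shows "set_mset M \<subseteq> {2..n}"
proof
  fix j
  assume "j \<in># M"
  then obtain M' where M': "M = add_mset j M'"
    by (metis multi_member_split)
  define x where "x = (\<Sum>k\<in>#M'. gen a b n k)"
  have x: "x \<in> Ssg a b n"
    unfolding x_def Ssg_iff_mset using M(1) M' by auto
  have w: "w = gen a b n j + x"
    using M(2) M' x_def by simp
  have no_a1: "w \<noteq> gen a b n 1 + y" if "y \<in> Ssg a b n" for y
    using assms(3) that by (auto simp: Apery_def)
  have "j \<noteq> 1"
    using no_a1[OF x] w by blast
  moreover have "j \<le> n"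
  proof (rule ccontr)
    assume "\<not> j \<le> n"
    then have "j > n" by simp
    have "a * b ^ (j - n - 1) \<ge> 1"
      using assms(1,2) by simp
    then obtain c where c: "a * b ^ (j - n - 1) = c + 1"
      by (metis le_add_diff_inverse2)
    then have "a * b ^ (j - n - 1) * gen a b n 1 = gen a b n 1 + c * gen a b n 1"
      by simp
    then have "w = gen a b n 1 + (gen a b n (j - n) + c * gen a b n 1 + x)"
      using w gen_reduce[OF \<open>j > n\<close>, of a b] by simp
    moreover have "gen a b n (j - n) + c * gen a b n 1 + x \<in> Ssg a b n"
      using \<open>j > n\<close> x by (intro Ssg_add gen_in_Ssg mult_in_Ssg) auto
    ultimately show False
      using no_a1 by blast
  qed
  ultimately show "j \<in> {2..n}"
    using M(1) M' by auto
qed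

lemma gen_mset_exchange:
  assumes "b > 1" "2 \<le> i" "i \<le> j" and sub: "replicate_mset b j + {#i#} \<subseteq># M"
  obtains M' where "set_mset M' \<subseteq> insert (i - 1) (insert (j + 1) (set_mset M))"
    and "(\<Sum>k\<in>#M'. gen a b n k) = (\<Sum>k\<in>#M. gen a b n k)"
    and "\<Sum>\<^sub># M' < \<Sum>\<^sub># M"
proof
  define X where "X = replicate_mset b j + {#i#}"
  define M' where "M' = M - X + replicate_mset b (i - 1) + {#j + 1#}"
  have M: "M = M - X + X"
    using sub unfolding X_def by (metis subset_mset.diff_add)
  show "set_mset M' \<subseteq> insert (i - 1) (insert (j + 1) (set_mset M))"
    unfolding M'_def by (auto dest: in_diffD)
  have "(\<Sum>k\<in>#M. gen a b n k) = (\<Sum>k\<in>#M - X. gen a b n k) + (b * gen a b n j + gen a b n i)"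
    by (subst M) (simp add: X_def)
  also have "b * gen a b n j + gen a b n i = b * gen a b n (i - 1) + gen a b n (j + 1)"
    using assms(2,3) by (intro gen_exchange) auto
  finally show "(\<Sum>k\<in>#M'. gen a b n k) = (\<Sum>k\<in>#M. gen a b n k)"
    by (simp add: M'_def)
  have "(b - 1) * (i - 1) < (b - 1) * j"
    using assms by simp
  moreover have "b * (i - 1) = (b - 1) * (i - 1) + (i - 1)" "b * j = (b - 1) * j + j"
    using assms(1) by (simp_all add: diff_mult_distrib)
  ultimately have "b * (i - 1) + (j + 1) < b * j + i"
    using assms(2) by linarith
  moreover have "\<Sum>\<^sub># M = \<Sum>\<^sub># (M - X) + (b * j + i)"
    by (subst M) (simp add: X_def)
  ultimately show "\<Sum>\<^sub># M' < \<Sum>\<^sub># M"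
    by (simp add: M'_def)
qed

definition admissible_digits :: "nat \<Rightarrow> (nat \<Rightarrow> nat) \<Rightarrow> nat \<Rightarrow> bool" where
  "admissible_digits b d m \<longleftrightarrow> (\<forall>j\<in>{2..m}. d j \<le> b \<and> (d j = b \<longrightarrow> (\<forall>k\<in>{2..<j}. d k = 0)))"

lemma Apery_admissible_repr:
  assumes "a > 0" "b > 1" "w \<in> Apery a b n"
  shows "\<exists>d. admissible_digits b d n \<and> w = (\<Sum>j=2..n. d j * gen a b n j)"
proof -
  define P where "P M \<longleftrightarrow> (\<forall>j\<in>#M. j \<ge> 1) \<and> w = (\<Sum>j\<in>#M. gen a b n j)" for M
  obtain M0 where "P M0"
    using assms(3) unfolding P_def Apery_def Ssg_iff_mset by blast
  then obtain M where PM: "P M" and least: "\<And>M'. P M' \<Longrightarrow> \<Sum>\<^sub># M \<le> \<Sum>\<^sub># M'"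
    using ex_has_least_nat[of P M0 sum_mset] by blast
  have support: "set_mset M \<subseteq> {2..n}"
    using Apery_mset_support[OF assms(1) _ assms(3)] assms(2) PM unfolding P_def by auto
  have no_exchange: "\<not> replicate_mset b j + {#i#} \<subseteq># M" if "i \<in># M" "i \<le> j" for i j
  proof
    assume sub: "replicate_mset b j + {#i#} \<subseteq># M"
    have "2 \<le> i"
      using support that by auto
    then obtain M' where "set_mset M' \<subseteq> insert (i - 1) (insert (j + 1) (set_mset M))"
      and "(\<Sum>k\<in>#M'. gen a b n k) = (\<Sum>k\<in>#M. gen a b n k)" and "\<Sum>\<^sub># M' < \<Sum>\<^sub># M"
      using gen_mset_exchange[OF assms(2) _ \<open>i \<le> j\<close> sub] by blast
    then have "P M'"
      using PM \<open>2 \<le> i\<close> unfolding P_def by auto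
    with least \<open>\<Sum>\<^sub># M' < \<Sum>\<^sub># M\<close> show False
      by fastforce
  qed
  have sub: "replicate_mset b j + {#i#} \<subseteq># M"
    if "count M j \<ge> b + (if i = j then 1 else 0)" "i \<in># M" for i j
    using that unfolding subseteq_mset_def by (auto simp: Suc_le_eq)
  have "count M j \<le> b" for j
  proof (rule ccontr)
    assume "\<not> count M j \<le> b"
    then have "j \<in># M"
      by (metis count_eq_zero_iff le0)
    then show False
      using no_exchange[of j j] sub[of j j] \<open>\<not> count M j \<le> b\<close> by simp
  qed
  moreover have "count M k = 0" if "count M j = b" "k < j" for j k
    using no_exchange[of k j] sub[of k j] that by (auto simp: count_eq_zero_iff)
  ultimately have "admissible_digits b (count M) n"
    unfolding admissible_digits_def by auto
  moreover have "w = (\<Sum>j=2..n. count M j * gen a b n j)"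
    using PM support sum_mset_image_eq_sum_count[of M "{2..n}"] unfolding P_def by simp
  ultimately show ?thesis
    by blast
qed

definition digit_value :: "nat \<Rightarrow> (nat \<Rightarrow> nat) \<Rightarrow> nat \<Rightarrow> nat" where
  "digit_value b d m = (\<Sum>j=2..m. d j * repunit b (j - 1))"

lemma digit_value_Suc: "m \<ge> 1 \<Longrightarrow> digit_value b d (Suc m) = digit_value b d m + d (Suc m) * repunit b m"
  unfolding digit_value_def by (simp add: sum.cl_ivl_Suc)

lemma admissible_digits_SucD: "admissible_digits b d (Suc m) \<Longrightarrow> admissible_digits b d m"
  unfolding admissible_digits_def by auto

lemma digit_value_less_repunit:
  "b \<ge> 1 \<Longrightarrow> m \<ge> 1 \<Longrightarrow> admissible_digits b d m \<Longrightarrow> digit_value b d m < repunit b m"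
proof (induction m)
  case 0
  then show ?case by simp
next
  case (Suc m)
  show ?case
  proof (cases "m = 0")
    case True
    then show ?thesis
      by (simp add: digit_value_def repunit_def)
  next
    case False
    then have "m \<ge> 1" by simp
    have IH: "digit_value b d m < repunit b m"
      using Suc \<open>m \<ge> 1\<close> admissible_digits_SucD by blast
    have top: "d (Suc m) \<le> b" "d (Suc m) = b \<Longrightarrow> \<forall>k\<in>{2..<Suc m}. d k = 0"
      using Suc.prems(3) \<open>m \<ge> 1\<close> unfolding admissible_digits_def by auto
    show ?thesis
    proof (cases "d (Suc m) = b")
      case True
      then have "digit_value b d m = 0"
        using top(2) unfolding digit_value_def by (auto intro!: sum.neutral)
      then show ?thesis
        using True \<open>m \<ge> 1\<close> by (simp add: digit_value_Suc repunit_Suc)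
    next
      case False
      then have "d (Suc m) * repunit b m \<le> (b - 1) * repunit b m"
        using top(1) by (intro mult_le_mono1) simp
      moreover have "(b - 1) * repunit b m + repunit b m = b * repunit b m"
        using Suc.prems(1) by (cases b) auto
      ultimately have "digit_value b d m + d (Suc m) * repunit b m < b * repunit b m + 1"
        using IH by linarith
      then show ?thesis
        using \<open>m \<ge> 1\<close> by (simp add: digit_value_Suc repunit_Suc)
    qed
  qed
qed

lemma admissible_digits_unique:
  assumes "b \<ge> 1" "m \<ge> 1" "admissible_digits b d m" "admissible_digits b e m"
    and "digit_value b d m = digit_value b e m"
  shows "\<forall>j\<in>{2..m}. d j = e j"
  using assms(2-)
proof (induction m)
  case 0
  then show ?case by simp
next
  case (Suc m)
  show ?case
  proof (cases "m = 0")
    case True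
    then show ?thesis by simp
  next
    case False
    then have "m \<ge> 1" by simp
    have pos: "repunit b m > 0"
      using repunit_pos[OF \<open>m \<ge> 1\<close>] .
    have "digit_value b f m < repunit b m" if "f = d \<or> f = e" for f
      using digit_value_less_repunit[OF assms(1) \<open>m \<ge> 1\<close>] Suc.prems admissible_digits_SucD that
      by blast
    then have top: "(digit_value b f m + f (Suc m) * repunit b m) div repunit b m = f (Suc m)"
      if "f = d \<or> f = e" for f
      using pos that by simp
    have eq: "digit_value b d m + d (Suc m) * repunit b m = digit_value b e m + e (Suc m) * repunit b m"
      using Suc.prems(4) \<open>m \<ge> 1\<close> by (simp add: digit_value_Suc)
    then have "d (Suc m) = e (Suc m)"
      using top[of d] top[of e] by simp
    moreover have "\<forall>j\<in>{2..m}. d j = e j"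
      using Suc.IH \<open>m \<ge> 1\<close> Suc.prems(2,3) admissible_digits_SucD eq calculation by simp
    ultimately show ?thesis
      by (auto simp: le_Suc_eq)
  qed
qed

lemma gen_combination:
  "(\<Sum>j=2..n. d j * gen a b n j) = (\<Sum>j=2..n. d j) * repunit b n + a * digit_value b d n"
  unfolding gen_def digit_value_def
  by (simp add: algebra_simps sum.distrib sum_distrib_left sum_distrib_right)

lemma coprime_mult_cancel_below:
  fixes a r x y :: nat
  assumes "coprime a r" "x < r" "y < r" "a * x + k * r = a * y + l * r"
  shows "x = y"
proof -
  have "[a * x = a * y] (mod r)"
    using assms(4) unfolding cong_def by (metis mod_mult_self1)
  then have "[x = y] (mod r)"
    using cong_mult_lcancel_nat[OF assms(1)] by simp
  then show ?thesis
    using assms(2,3) by (simp add: cong_def)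
qed

lemma admissible_repr_unique:
  assumes "b \<ge> 1" "n \<ge> 1" "coprime a (repunit b n)"
    and "admissible_digits b d n" "admissible_digits b e n"
    and "(\<Sum>j=2..n. d j * gen a b n j) + k * gen a b n 1 = (\<Sum>j=2..n. e j * gen a b n j) + l * gen a b n 1"
  shows "(\<forall>j\<in>{2..n}. d j = e j) \<and> k = l"
proof -
  let ?r = "repunit b n"
  have eq: "a * digit_value b d n + ((\<Sum>j=2..n. d j) + k) * ?r
      = a * digit_value b e n + ((\<Sum>j=2..n. e j) + l) * ?r"
    using assms(6) unfolding gen_combination gen_1 by (simp add: algebra_simps)
  have "digit_value b d n = digit_value b e n"
    using coprime_mult_cancel_below[OF assms(3) _ _ eq] assms(4,5)
      digit_value_less_repunit[OF assms(1,2)] by blast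
  then have digits: "\<forall>j\<in>{2..n}. d j = e j"
    using admissible_digits_unique[OF assms(1,2,4,5)] by blast
  then have "(\<Sum>j=2..n. d j) = (\<Sum>j=2..n. e j)"
    by (intro sum.cong) auto
  then have "k * ?r = l * ?r"
    using eq \<open>digit_value b d n = digit_value b e n\<close> by (simp add: algebra_simps)
  then show ?thesis
    using digits repunit_pos[OF assms(2), of b] by simp
qed

lemma Ssg_admissible_repr:
  assumes "a > 0" "b > 1" "n \<ge> 1" "s \<in> Ssg a b n"
  shows "\<exists>d k. admissible_digits b d n \<and> s = (\<Sum>j=2..n. d j * gen a b n j) + k * gen a b n 1"
  using assms(4)
proof (induction s rule: less_induct)
  case (less s)
  show ?case
  proof (cases "s \<in> Apery a b n")
    case True
    then show ?thesis
      using Apery_admissible_repr[OF assms(1,2)] by (metis add_0_right mult_0)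
  next
    case False
    then have "s \<ge> gen a b n 1" "s - gen a b n 1 \<in> Ssg a b n"
      using less.prems by (auto simp: Apery_def)
    moreover have "gen a b n 1 > 0"
      unfolding gen_1 using repunit_pos[OF assms(3)] .
    ultimately obtain d k where "admissible_digits b d n"
      "s - gen a b n 1 = (\<Sum>j=2..n. d j * gen a b n j) + k * gen a b n 1"
      using less.IH[of "s - gen a b n 1"] by auto
    with \<open>s \<ge> gen a b n 1\<close> show ?thesis
      by (intro exI[of _ d] exI[of _ "Suc k"]) auto
  qed
qed

definition alpha_coeff :: "nat \<Rightarrow> nat \<Rightarrow> nat \<Rightarrow> nat" where
  "alpha_coeff b i j = (if j = i then b else if j > i then b - 1 else 0)"

lemma alpha_eq_combination:
  assumes "b \<ge> 1" "i \<in> {2..n}"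
  shows "alpha a b n i = (\<Sum>j=2..n. alpha_coeff b i j * gen a b n j)"
proof -
  let ?g = "gen a b n"
  have "(\<Sum>j=2..n. alpha_coeff b i j * ?g j)
      = (\<Sum>j=2..n. (if j = i then ?g j else 0) + (if i \<le> j then (b - 1) * ?g j else 0))"
  proof (rule sum.cong)
    fix j
    have "b * ?g j = ?g j + (b - 1) * ?g j"
      using assms(1) by (cases b) auto
    then show "alpha_coeff b i j * ?g j = (if j = i then ?g j else 0) + (if i \<le> j then (b - 1) * ?g j else 0)"
      by (auto simp: alpha_coeff_def)
  qed simp
  also have "\<dots> = ?g i + (\<Sum>j=2..n. if i \<le> j then (b - 1) * ?g j else 0)"
    using assms(2) by (simp add: sum.distrib)
  also have "(\<Sum>j=2..n. if i \<le> j then (b - 1) * ?g j else 0) = (\<Sum>j\<in>{j\<in>{2..n}. i \<le> j}. (b - 1) * ?g j)"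
    by (rule sum.inter_filter[symmetric]) simp
  also have "{j\<in>{2..n}. i \<le> j} = {i..n}"
    using assms(2) by auto
  finally show ?thesis
    by (simp add: alpha_def)
qed

lemma admissible_alpha_coeff: "b > 1 \<Longrightarrow> admissible_digits b (alpha_coeff b i) n"
  unfolding admissible_digits_def alpha_coeff_def by auto

lemma admissible_digits_le_alpha_coeff:
  assumes "admissible_digits b d n" "n \<ge> 2"
  shows "\<exists>i\<in>{2..n}. \<forall>j\<in>{2..n}. d j \<le> alpha_coeff b i j"
proof (cases "\<forall>j\<in>{2..n}. d j = 0")
  case True
  then show ?thesis
    using assms(2) by (intro bexI[of _ 2]) auto
next
  case False
  define i where "i = (LEAST j. j \<in> {2..n} \<and> d j \<noteq> 0)"
  have "\<exists>j. j \<in> {2..n} \<and> d j \<noteq> 0"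
    using False by blast
  then have i: "i \<in> {2..n} \<and> d i \<noteq> 0"
    unfolding i_def by (rule LeastI_ex)
  have "d j \<le> alpha_coeff b i j" if j: "j \<in> {2..n}" for j
  proof -
    have le_b: "d j \<le> b" and top: "d j = b \<Longrightarrow> \<forall>k\<in>{2..<j}. d k = 0"
      using assms(1) j unfolding admissible_digits_def by blast+
    consider "j < i" | "j = i" | "i < j"
      by linarith
    then show ?thesis
    proof cases
      case 1
      then have "d j = 0"
        using j not_less_Least[of j "\<lambda>j. j \<in> {2..n} \<and> d j \<noteq> 0"] unfolding i_def by blast
      then show ?thesis by simp
    next
      case 2
      then show ?thesis
        using le_b by (simp add: alpha_coeff_def)
    next
      case 3
      then have "d j \<noteq> b"
        using top i by auto
      then show ?thesis
        using 3 le_b by (simp add: alpha_coeff_def)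
    qed
  qed
  with i show ?thesis
    by blast
qed

lemma alpha_add_a:
  assumes "b \<ge> 1" "2 \<le> i" "i < n"
  shows "alpha a b n i + a = alpha a b n (i + 1) + (b ^ n - 1)"
proof -
  let ?g = "gen a b n"
  let ?T = "\<Sum>j=Suc i..n. (b - 1) * ?g j"
  have "alpha a b n i = ?g i + (b - 1) * ?g i + ?T"
    unfolding alpha_def using assms by (simp add: sum.atLeast_Suc_atMost)
  also have "?g i + (b - 1) * ?g i = b * ?g i"
    using assms(1) by (cases b) auto
  finally have alpha_i: "alpha a b n i = b * ?g i + ?T" .
  have "repunit b i = b * repunit b (i - 1) + 1"
    using assms(2) repunit_Suc[of b "i - 1"] by simp
  then have "b * ?g i + a = b * repunit b n + a * repunit b i"
    by (simp add: gen_def algebra_simps)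
  also have "b * repunit b n = repunit b n + (b ^ n - 1)"
    using repunit_mult_pred[OF assms(1), of n] assms(1) by (cases b) (auto simp: algebra_simps)
  finally have "b * ?g i + a = ?g (i + 1) + (b ^ n - 1)"
    by (simp add: gen_def)
  then show ?thesis
    using alpha_i by (simp add: alpha_def)
qed

lemma alpha_in_Apery:
  assumes "a > 0" "b > 1" "n \<ge> 1" "coprime a (repunit b n)" and i: "i \<in> {2..n}"
  shows "alpha a b n i \<in> Apery a b n"
proof -
  have b1: "b \<ge> 1"
    using assms(2) by simp
  have "alpha a b n i - gen a b n 1 \<notin> Ssg a b n" if le: "gen a b n 1 \<le> alpha a b n i"
  proof
    assume "alpha a b n i - gen a b n 1 \<in> Ssg a b n"
    then obtain d k where d: "admissible_digits b d n"
      "alpha a b n i - gen a b n 1 = (\<Sum>j=2..n. d j * gen a b n j) + k * gen a b n 1"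
      using Ssg_admissible_repr[OF assms(1-3)] by blast
    have "(\<Sum>j=2..n. alpha_coeff b i j * gen a b n j) + 0 * gen a b n 1
        = (\<Sum>j=2..n. d j * gen a b n j) + Suc k * gen a b n 1"
      using d(2) le alpha_eq_combination[OF b1 i] by simp
    then show False
      using admissible_repr_unique[OF b1 assms(3,4) admissible_alpha_coeff[OF assms(2)] d(1)]
      by blast
  qed
  moreover have "alpha a b n i \<in> Ssg a b n"
    unfolding alpha_def using i by (intro Ssg_add gen_in_Ssg sum_in_Ssg mult_in_Ssg) auto
  ultimately show ?thesis
    by (auto simp: Apery_def)
qed

lemma Apery_le_alpha:
  assumes "a > 0" "b > 1" "n \<ge> 2" "w \<in> Apery a b n"
  shows "\<exists>i\<in>{2..n}. w \<le> alpha a b n i"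
proof -
  obtain d where d: "admissible_digits b d n" "w = (\<Sum>j=2..n. d j * gen a b n j)"
    using Apery_admissible_repr[OF assms(1,2,4)] by blast
  then obtain i where i: "i \<in> {2..n}" "\<forall>j\<in>{2..n}. d j \<le> alpha_coeff b i j"
    using admissible_digits_le_alpha_coeff[OF d(1) assms(3)] by blast
  then have "w \<le> (\<Sum>j=2..n. alpha_coeff b i j * gen a b n j)"
    unfolding d(2) by (intro sum_mono mult_le_mono1) auto
  also have "\<dots> = alpha a b n i"
    using alpha_eq_combination[OF _ i(1)] assms(2) by simp
  finally show ?thesis
    using i(1) by blast
qed

theorem lemma21:
  fixes a b n :: nat
  assumes "a > 0" and "b > 1" and "n > 1" and "gcd (repunit b n) a = 1"
  shows "(\<forall>i\<in>{2..n}. alpha a b n i \<in> Apery a b n)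
    \<and> (a < b ^ n - 1 \<longrightarrow> (\<forall>i. 2 \<le> i \<and> i < n \<longrightarrow> alpha a b n i > alpha a b n (i + 1)))
    \<and> (a > b ^ n - 1 \<longrightarrow> (\<forall>i. 2 \<le> i \<and> i < n \<longrightarrow> alpha a b n i < alpha a b n (i + 1)))
    \<and> (\<forall>w\<in>Apery a b n. \<exists>i\<in>{2..n}. w \<le> alpha a b n i)"
proof -
  have "coprime a (repunit b n)"
    using assms(4) by (simp add: coprime_iff_gcd_eq_1 gcd.commute)
  then have "alpha a b n i \<in> Apery a b n" if "i \<in> {2..n}" for i
    using alpha_in_Apery assms(1-3) that by simp
  moreover have "\<exists>i\<in>{2..n}. w \<le> alpha a b n i" if "w \<in> Apery a b n" for w
    using Apery_le_alpha assms(1-3) that by simp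
  moreover have "alpha a b n (i + 1) < alpha a b n i" if "a < b ^ n - 1" "2 \<le> i" "i < n" for i
    using alpha_add_a[of b i n a] assms(2) that by linarith
  moreover have "alpha a b n i < alpha a b n (i + 1)" if "a > b ^ n - 1" "2 \<le> i" "i < n" for i
    using alpha_add_a[of b i n a] assms(2) that by linarith
  ultimately show ?thesis
    by blast
qed

end
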